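(* Let $n\ge 3$, let $A_1\ldots A_n$ be a regular $n$-gon in the coordinate plane with center $O$ of abscissa $o$ and circumradius $R$, and let $f(x)$ be a real polynomial of degree $n$ whose roots, counted with multiplicity, are the abscissas of $A_1,\ldots,A_n$. Consider all circles centered at $O$ that are tangent to some segment $A_iA_j$ ($i\ne j$, sides included) not passing through $O$; these are the circles $\omega_k$ of radius $R\cos(\pi k/n)$, $k=1,\ldots,\lfloor (n-1)/2\rfloor$ (with $\omega_1$ the inscribed circle). Then for each such circle, exactly two of the vertical lines through the roots of $f'$ are tangent to it; that is, $o\pm R\cos(\pi k/n)$ are roots of $f'$ for each $k=1,\ldots,\lfloor (n-1)/2\rfloor$. When $n$ is even, the one remaining root of $f'$ is $o$ (the corresponding vertical line passes through $O$).
   Context: "Vertical" means parallel to the ordinate axis. *)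

theory Defs
  imports "HOL-Analysis.Analysis" "HOL-Computational_Algebra.Polynomial"
begin

definition regular_polygon :: "nat \<Rightarrow> real \<times> real \<Rightarrow> real \<Rightarrow> (nat \<Rightarrow> real \<times> real) \<Rightarrow> bool" where
  "regular_polygon n C R A \<longleftrightarrow> R > 0 \<and>
     (\<exists>\<theta> \<sigma>. (\<sigma> = 1 \<or> \<sigma> = -1) \<and>
        (\<forall>j<n. A j = (fst C + R * cos (\<theta> + \<sigma> * 2 * pi * real j / real n),
                       snd C + R * sin (\<theta> + \<sigma> * 2 * pi * real j / real n))))"

end

theory Submission
  imports Defs
begin

text \<open>
  Up to its leading coefficient, \<open>f(x)\<close> is the product of \<open>x - o - R cos \<alpha>\<close> over the
  angles \<open>\<alpha> = \<theta> \<plusminus> 2\<pi>j/n\<close> of the vertices. Writing \<open>2 e^(i\<phi>) (cos \<phi> - cos \<alpha>)\<close> as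
  \<open>(e^(i\<phi>) - e^(i\<alpha>)) (e^(i\<phi>) - e^(-i\<alpha>))\<close> and using \<open>\<Prod>(z - w\<xi>) = z^n - w^n\<close> over the
  \<open>n\<close>-th roots of unity \<open>\<xi>\<close> gives the Chebyshev-type identity
  \<open>f(o + R cos \<phi>) = K (cos n\<phi> - cos n\<theta>)\<close>. Differentiating in \<open>\<phi>\<close> shows that \<open>f'\<close>
  vanishes at \<open>o + R cos (\<pi>k/n)\<close> for \<open>0 < k < n\<close>. These are \<open>n - 1\<close> distinct points, hence
  all roots of \<open>f'\<close>, and \<open>cos (\<pi>(n-k)/n) = - cos (\<pi>k/n)\<close> pairs them symmetrically about \<open>o\<close>.
\<close>

lemma
  fixes M :: "'a::idom multiset"
  shows degree_prod_linear_factors: "degree (\<Prod>x\<in>#M. [:-x, 1:]) = size M"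
    and lead_coeff_prod_linear_factors: "lead_coeff (\<Prod>x\<in>#M. [:-x, 1:]) = 1"
proof (induction M)
  case (add x M)
  have "(\<Prod>y\<in>#M. [:-y, 1:]) \<noteq> 0"
    using add.IH(2) by auto
  then have "degree ([:-x, 1:] * (\<Prod>y\<in>#M. [:-y, 1:])) = 1 + size M"
    using add.IH(1) by (subst degree_mult_eq) auto
  moreover have "lead_coeff ([:-x, 1:] * (\<Prod>y\<in>#M. [:-y, 1:])) = 1"
    using add.IH(2) by (simp only: lead_coeff_mult) simp
  ultimately show "degree (\<Prod>y\<in>#add_mset x M. [:-y, 1:]) = size (add_mset x M)"
    and "lead_coeff (\<Prod>y\<in>#add_mset x M. [:-y, 1:]) = 1"
    by simp_all
qed simp_all

lemma prod_linear_factors_dvd: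
  fixes p :: "'a::idom poly"
  assumes "M \<subseteq># proots p"
  shows "(\<Prod>x\<in>#M. [:-x, 1:]) dvd p"
  using assms
proof (induction M arbitrary: p)
  case (add x M)
  show ?case
  proof (cases "p = 0")
    case False
    have "order x p \<ge> 1"
      using add.prems False by (metis count_proots mset_subset_eq_insertD count_eq_zero_iff less_one not_le)
    then obtain q where q: "p = [:-x, 1:] * q"
      using order_divides[of x 1 p] by (auto elim: dvdE)
    with False have "q \<noteq> 0" by auto
    then have "proots p = add_mset x (proots q)"
      using proots_mult[of "[:-x, 1:]" q] by (simp add: q)
    then have "(\<Prod>y\<in>#M. [:-y, 1:]) dvd q"
      using add.prems by (intro add.IH) simp
    then show ?thesis
      unfolding q prod_mset.add_mset image_mset_add_mset by (rule mult_dvd_mono[OF dvd_refl])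
  qed simp
qed simp

lemma smult_lead_coeff_prod_linear_factors:
  fixes p :: "'a::idom poly"
  assumes "M \<subseteq># proots p" and "size M = degree p"
  shows "smult (lead_coeff p) (\<Prod>x\<in>#M. [:-x, 1:]) = p"
proof (cases "p = 0")
  case False
  obtain r where r: "p = (\<Prod>x\<in>#M. [:-x, 1:]) * r"
    using prod_linear_factors_dvd[OF assms(1)] by (elim dvdE)
  with False have "r \<noteq> 0" "(\<Prod>x\<in>#M. [:-x, 1:]) \<noteq> 0" by auto
  then have "degree r = 0"
    using r assms(2) by (simp add: degree_mult_eq degree_prod_linear_factors)
  moreover have "lead_coeff p = lead_coeff r"
    using r by (simp only: lead_coeff_mult lead_coeff_prod_linear_factors mult_1)
  ultimately have "r = [:lead_coeff p:]"
    by (metis degree_0_id)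
  then show ?thesis
    using r by (metis mult.commute smult_one mult_smult_left mult_1)
qed simp

lemma poly_roots_eq_of_degree_le_card:
  fixes p :: "'a::idom poly"
  assumes "p \<noteq> 0" and "finite S" and "S \<subseteq> {x. poly p x = 0}" and "degree p \<le> card S"
  shows "{x. poly p x = 0} = S"
  using card_seteq[OF poly_roots_finite[OF assms(1)] assms(3)] card_poly_roots_bound[OF assms(1)] assms(4)
  by simp

lemma mset_set_subset_proots:
  fixes p :: "'a::idom poly"
  assumes "p \<noteq> 0" and "finite S" and "\<And>x. x \<in> S \<Longrightarrow> poly p x = 0"
  shows "mset_set S \<subseteq># proots p"
proof (rule mset_subset_eqI)
  fix x
  show "count (mset_set S) x \<le> count (proots p) x"
    using assms by (cases "x \<in> S") (auto simp: order_root Suc_leI)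
qed

lemma prod_roots_unity_diff:
  fixes z w :: complex
  assumes "n > 0"
  shows "(\<Prod>\<xi> | \<xi> ^ n = 1. z - w * \<xi>) = z ^ n - w ^ n"
proof (cases "w = 0")
  case True
  then show ?thesis
    using assms by (simp add: card_roots_unity_eq)
next
  case False
  define p :: "complex poly" where "p = monom 1 n + [:-(w ^ n):]"
  define S where "S = (\<lambda>\<xi>. w * \<xi>) ` {\<xi>. \<xi> ^ n = 1}"
  have inj: "inj_on (\<lambda>\<xi>. w * \<xi>) {\<xi>. \<xi> ^ n = 1}"
    using False by (auto intro: inj_onI)
  have poly_p: "poly p x = x ^ n - w ^ n" for x
    by (simp add: p_def poly_monom)
  have deg: "degree p = n"
    using assms by (simp add: p_def degree_add_eq_left degree_monom_eq)
  then have "p \<noteq> 0" "lead_coeff p = 1"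
    using assms by (auto simp: p_def coeff_pCons split: nat.split)
  moreover have "finite S" "card S = n"
    using assms inj by (simp_all add: S_def finite_roots_unity card_image card_roots_unity_eq)
  moreover have "poly p x = 0" if "x \<in> S" for x
    using that by (auto simp: S_def poly_p power_mult_distrib)
  ultimately have "smult 1 (\<Prod>x\<in>#mset_set S. [:-x, 1:]) = p"
    using deg by (metis smult_lead_coeff_prod_linear_factors mset_set_subset_proots size_mset_set)
  then have "poly p z = (\<Prod>x\<in>S. z - x)"
    by (auto simp: poly_prod_mset prod_unfold_prod_mset)
  also have "\<dots> = (\<Prod>\<xi> | \<xi> ^ n = 1. z - w * \<xi>)"
    unfolding S_def using inj by (simp add: prod.reindex)
  finally show ?thesis
    by (simp add: poly_p)
qed

lemma bij_betw_roots_unity_orientation: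
  assumes "n > 0" and "\<sigma> = 1 \<or> \<sigma> = -1"
  shows "bij_betw (\<lambda>k. cis (\<sigma> * 2 * pi * real k / real n)) {..<n} {z. z ^ n = 1}"
  using assms(2)
proof
  assume "\<sigma> = -1"
  have "bij_betw cnj {z::complex. z ^ n = 1} {z. z ^ n = 1}"
    by (rule bij_betw_byWitness[where f' = cnj]) (auto simp flip: complex_cnj_power)
  from bij_betw_trans[OF Complex.bij_betw_roots_unity[OF assms(1)] this] \<open>\<sigma> = -1\<close>
  show ?thesis
    by (simp add: o_def cis_cnj)
qed (use Complex.bij_betw_roots_unity[OF assms(1)] in simp)

lemma cis_diff_mult_cis_diff:
  "(cis a - cis b) * (cis a - cis (-b)) = 2 * cis a * complex_of_real (cos a - cos b)"
proof -
  have "sin a ^ 2 = 1 - cos a ^ 2" "sin b ^ 2 = 1 - cos b ^ 2"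
    by (simp_all add: sin_squared_eq)
  then show ?thesis
    unfolding cis.ctr by (simp add: complex_eq_iff algebra_simps Re_power2 Im_power2)
qed

lemma prod_cis_diff_equally_spaced:
  assumes "n > 0" and "\<sigma> = 1 \<or> \<sigma> = -1"
  shows "(\<Prod>j<n. cis \<phi> - cis (\<theta> + \<sigma> * 2 * pi * real j / real n)) = cis (n * \<phi>) - cis (n * \<theta>)"
proof -
  have "(\<Prod>j<n. cis \<phi> - cis (\<theta> + \<sigma> * 2 * pi * real j / real n))
      = (\<Prod>j<n. cis \<phi> - cis \<theta> * cis (\<sigma> * 2 * pi * real j / real n))"
    by (simp add: cis_mult)
  also have "\<dots> = (\<Prod>\<xi> | \<xi> ^ n = 1. cis \<phi> - cis \<theta> * \<xi>)"
    by (rule prod.reindex_bij_betw[OF bij_betw_roots_unity_orientation[OF assms]])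
  also have "\<dots> = cis (n * \<phi>) - cis (n * \<theta>)"
    using assms(1) by (simp add: prod_roots_unity_diff Complex.DeMoivre)
  finally show ?thesis .
qed

lemma prod_cos_diff_equally_spaced:
  assumes "n > 0" and "\<sigma> = 1 \<or> \<sigma> = -1"
  shows "2 ^ n * (\<Prod>j<n. cos \<phi> - cos (\<theta> + \<sigma> * 2 * pi * real j / real n))
       = 2 * (cos (n * \<phi>) - cos (n * \<theta>))"
proof -
  define \<alpha> where "\<alpha> j = \<theta> + \<sigma> * 2 * pi * real j / real n" for j
  have "-\<sigma> = 1 \<or> -\<sigma> = -1"
    using assms(2) by auto
  then have "(\<Prod>j<n. cis \<phi> - cis (- \<alpha> j)) = cis (n * \<phi>) - cis (n * -\<theta>)"
    using prod_cis_diff_equally_spaced[OF assms(1), of "-\<sigma>" \<phi> "-\<theta>"]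
    by (simp add: \<alpha>_def)
  moreover have "(\<Prod>j<n. cis \<phi> - cis (\<alpha> j)) = cis (n * \<phi>) - cis (n * \<theta>)"
    unfolding \<alpha>_def by (rule prod_cis_diff_equally_spaced[OF assms])
  ultimately have "(\<Prod>j<n. (cis \<phi> - cis (\<alpha> j)) * (cis \<phi> - cis (- \<alpha> j)))
      = (cis (n * \<phi>) - cis (n * \<theta>)) * (cis (n * \<phi>) - cis (- (n * \<theta>)))"
    by (simp add: prod.distrib)
  then have "(\<Prod>j<n. 2 * cis \<phi> * complex_of_real (cos \<phi> - cos (\<alpha> j)))
      = 2 * cis (n * \<phi>) * complex_of_real (cos (n * \<phi>) - cos (n * \<theta>))"
    by (simp only: cis_diff_mult_cis_diff)
  moreover have "(\<Prod>j<n. 2 * cis \<phi> * complex_of_real (cos \<phi> - cos (\<alpha> j)))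
      = 2 ^ n * cis (n * \<phi>) * complex_of_real (\<Prod>j<n. cos \<phi> - cos (\<alpha> j))"
    by (simp only: prod.distrib prod_constant of_real_prod card_lessThan
        power_mult_distrib Complex.DeMoivre)
  ultimately have "cis (n * \<phi>) * complex_of_real (2 ^ n * (\<Prod>j<n. cos \<phi> - cos (\<alpha> j)))
      = cis (n * \<phi>) * complex_of_real (2 * (cos (n * \<phi>) - cos (n * \<theta>)))"
    by (simp only: of_real_mult of_real_power of_real_numeral mult_ac)
  then show ?thesis
    unfolding \<alpha>_def by (simp only: mult_left_cancel cis_neq_zero of_real_eq_iff simp_thms)
qed

lemma poly_shifted_cos_eq:
  fixes f :: "real poly"
  assumes "n > 0" and "\<sigma> = 1 \<or> \<sigma> = -1" and "degree f = n"
    and "proots f = image_mset (\<lambda>j. a + R * cos (\<theta> + \<sigma> * 2 * pi * real j / real n)) (mset_set {..<n})"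
  shows "poly f (a + R * cos \<phi>) = 2 * lead_coeff f * (R / 2) ^ n * (cos (n * \<phi>) - cos (n * \<theta>))"
proof -
  have decomp: "smult (lead_coeff f) (\<Prod>x\<in>#proots f. [:-x, 1:]) = f"
    using assms(1,3,4) by (intro smult_lead_coeff_prod_linear_factors) simp_all
  have "poly f x = lead_coeff f * (\<Prod>j<n. x - (a + R * cos (\<theta> + \<sigma> * 2 * pi * real j / real n)))" for x
  proof -
    have "poly f x = lead_coeff f * poly (\<Prod>y\<in>#proots f. [:-y, 1:]) x"
      by (metis decomp poly_smult)
    also have "\<dots> = lead_coeff f * (\<Prod>j<n. x - (a + R * cos (\<theta> + \<sigma> * 2 * pi * real j / real n)))"
      by (simp add: assms(4) poly_prod_mset prod_unfold_prod_mset image_mset.compositionality o_def algebra_simps)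
    finally show ?thesis .
  qed
  then have "poly f (a + R * cos \<phi>)
      = lead_coeff f * (\<Prod>j<n. R * (cos \<phi> - cos (\<theta> + \<sigma> * 2 * pi * real j / real n)))"
    by (simp add: right_diff_distrib)
  also have "\<dots> = lead_coeff f * R ^ n * (\<Prod>j<n. cos \<phi> - cos (\<theta> + \<sigma> * 2 * pi * real j / real n))"
    by (simp add: prod.distrib)
  also have "\<dots> = lead_coeff f * R ^ n * (2 ^ n * (\<Prod>j<n. cos \<phi> - cos (\<theta> + \<sigma> * 2 * pi * real j / real n))) / 2 ^ n"
    by simp
  also have "\<dots> = lead_coeff f * R ^ n * (2 * (cos (n * \<phi>) - cos (n * \<theta>))) / 2 ^ n"
    by (simp only: prod_cos_diff_equally_spaced[OF assms(1,2)])
  also have "\<dots> = 2 * lead_coeff f * (R / 2) ^ n * (cos (n * \<phi>) - cos (n * \<theta>))"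
    by (simp add: power_divide)
  finally show ?thesis .
qed

lemma poly_pderiv_cos_pi_frac_eq_0:
  fixes f :: "real poly" and k n :: nat
  assumes cos_eq: "\<And>\<phi>. poly f (a + R * cos \<phi>) = K * (cos (real n * \<phi>) - c)"
    and "R \<noteq> 0" and "0 < k" and "k < n"
  shows "poly (pderiv f) (a + R * cos (pi * k / n)) = 0"
proof -
  define \<phi> where "\<phi> = pi * k / n"
  have "real n * \<phi> = k * pi"
    using assms(4) by (simp add: \<phi>_def)
  then have sin_n\<phi>: "sin (real n * \<phi>) = 0"
    by simp
  have "((\<lambda>t. poly f (a + R * cos t)) has_real_derivative
          poly (pderiv f) (a + R * cos \<phi>) * (- R * sin \<phi>)) (at \<phi>)"
    by (rule DERIV_chain2[OF poly_DERIV]) (auto intro!: derivative_eq_intros)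
  moreover have "((\<lambda>t. poly f (a + R * cos t)) has_real_derivative K * (- sin (real n * \<phi>) * n)) (at \<phi>)"
    unfolding cos_eq by (auto intro!: derivative_eq_intros)
  ultimately have "poly (pderiv f) (a + R * cos \<phi>) * (- R * sin \<phi>) = K * (- sin (real n * \<phi>) * n)"
    by (rule DERIV_unique)
  moreover have "sin \<phi> > 0"
    unfolding \<phi>_def using assms(3,4) by (intro sin_gt_zero) (auto simp: field_simps)
  ultimately show ?thesis
    using assms(2) sin_n\<phi> by (simp add: \<phi>_def)
qed

lemma inj_on_cos_pi_frac:
  assumes "n > 0"
  shows "inj_on (\<lambda>k. cos (pi * real k / real n)) {..n}"
proof (rule inj_onI)
  fix k l assume "k \<in> {..n}" "l \<in> {..n}" and eq: "cos (pi * real k / real n) = cos (pi * real l / real n)"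
  then have "pi * real k / real n \<le> pi" "pi * real l / real n \<le> pi"
    using assms by (auto simp: field_simps)
  moreover have "0 \<le> pi * real k / real n" "0 \<le> pi * real l / real n"
    by simp_all
  ultimately have "pi * real k / real n = pi * real l / real n"
    using cos_inj_pi eq by blast
  then show "k = l"
    using assms by simp
qed

lemma pderiv_roots_of_poly_shifted_cos:
  fixes f :: "real poly" and n :: nat
  assumes "\<And>\<phi>. poly f (a + R * cos \<phi>) = K * (cos (real n * \<phi>) - c)"
    and "degree f = n" and "n > 0" and "R \<noteq> 0"
  shows "{x. poly (pderiv f) x = 0} = (\<lambda>k. a + R * cos (pi * k / n)) ` {1..n-1}"
proof (rule poly_roots_eq_of_degree_le_card)
  show "pderiv f \<noteq> 0"
    using assms(2,3) by (auto simp: pderiv_eq_0_iff)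
  show "(\<lambda>k. a + R * cos (pi * k / n)) ` {1..n-1} \<subseteq> {x. poly (pderiv f) x = 0}"
    using poly_pderiv_cos_pi_frac_eq_0[OF assms(1,4)] by auto
  have "inj_on (\<lambda>k. a + R * cos (pi * k / n)) {1..n-1}"
    using inj_on_cos_pi_frac[OF assms(3)] assms(4) by (auto simp: inj_on_def)
  then show "degree (pderiv f) \<le> card ((\<lambda>k. a + R * cos (pi * k / n)) ` {1..n-1})"
    using assms(2) by (simp add: degree_pderiv card_image)
qed simp

lemma cos_pi_frac_complement:
  fixes k n :: nat
  assumes "k \<le> n" and "n > 0"
  shows "cos (pi * real (n - k) / real n) = - cos (pi * real k / real n)"
proof -
  have "pi * real (n - k) / real n = pi - pi * real k / real n"
    using assms by (simp add: of_nat_diff field_simps)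
  then show ?thesis
    by (simp add: cos_pi_minus)
qed

lemma cos_pi_frac_half:
  fixes k n :: nat
  assumes "2 * k = n" and "n > 0"
  shows "cos (pi * real k / real n) = 0"
proof -
  have "pi * real k / real n = pi / 2"
    using assms by (auto simp: field_simps)
  then show ?thesis
    by (simp only: cos_pi_half)
qed

lemma image_cos_pi_frac_split:
  fixes n :: nat
  assumes "n > 0"
  shows "(\<lambda>k. a + r * cos (pi * k / n)) ` {1..n-1} =
           {a + r * cos (pi * real k / real n) | k. k \<in> {1..(n - 1) div 2}}
           \<union> {a - r * cos (pi * real k / real n) | k. k \<in> {1..(n - 1) div 2}}
           \<union> (if even n then {a} else {})" (is "?S = ?P \<union> ?M \<union> ?E")
proof (intro equalityI subsetI)
  fix y assume "y \<in> ?S"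
  then obtain k where k: "k \<in> {1..n-1}" and y: "y = a + r * cos (pi * k / n)"
    by auto
  consider "2 * k < n" | "2 * k > n" | "2 * k = n"
    by linarith
  then show "y \<in> ?P \<union> ?M \<union> ?E"
  proof cases
    case 1
    then have "k \<in> {1..(n - 1) div 2}"
      using k by auto
    then show ?thesis
      using y by blast
  next
    case 2
    have "cos (pi * real (n - k) / real n) = - cos (pi * real k / real n)"
      using k assms by (intro cos_pi_frac_complement) auto
    then have "y = a - r * cos (pi * real (n - k) / real n)"
      using y by simp
    moreover have "n - k \<in> {1..(n - 1) div 2}"
      using 2 k by auto
    ultimately show ?thesis
      by blast
  next
    case 3
    then show ?thesis
      using y assms by (auto simp: cos_pi_frac_half)
  qed
next
  fix y assume "y \<in> ?P \<union> ?M \<union> ?E"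
  then consider k where "k \<in> {1..(n - 1) div 2}" "y = a + r * cos (pi * real k / real n)"
    | k where "k \<in> {1..(n - 1) div 2}" "y = a - r * cos (pi * real k / real n)"
    | "even n" "y = a"
    by (auto split: if_splits)
  then show "y \<in> ?S"
  proof cases
    case (1 k)
    then show ?thesis
      by auto
  next
    case (2 k)
    then have "cos (pi * real (n - k) / real n) = - cos (pi * real k / real n)"
      using assms by (intro cos_pi_frac_complement) auto
    then have "y = a + r * cos (pi * real (n - k) / real n)" "n - k \<in> {1..n-1}"
      using 2 by auto
    then show ?thesis
      by blast
  next
    case 3
    then have "y = a + r * cos (pi * real (n div 2) / real n)" "n div 2 \<in> {1..n-1}"
      using assms by (auto simp: cos_pi_frac_half)
    then show ?thesis
      by blast
  qed
qed

theorem theorem2: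
  fixes n :: nat and C :: "real \<times> real" and R :: real
    and A :: "nat \<Rightarrow> real \<times> real" and f :: "real poly"
  assumes "n \<ge> 3"
    and "regular_polygon n C R A"
    and "degree f = n"
    and "\<And>a. order a f = card {j. j < n \<and> fst (A j) = a}"
  shows "(\<forall>k\<in>{1..(n - 1) div 2}.
            poly (pderiv f) (fst C + R * cos (pi * real k / real n)) = 0 \<and>
            poly (pderiv f) (fst C - R * cos (pi * real k / real n)) = 0)
       \<and> {x. poly (pderiv f) x = 0} =
            {fst C + R * cos (pi * real k / real n) | k. k \<in> {1..(n - 1) div 2}}
            \<union> {fst C - R * cos (pi * real k / real n) | k. k \<in> {1..(n - 1) div 2}}
            \<union> (if even n then {fst C} else {})"
proof -
  have n: "n > 0"
    using assms(1) by simp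
  obtain \<theta> \<sigma> where "R > 0" and \<sigma>: "\<sigma> = 1 \<or> \<sigma> = -1"
    and A: "\<And>j. j < n \<Longrightarrow> fst (A j) = fst C + R * cos (\<theta> + \<sigma> * 2 * pi * real j / real n)"
    using assms(2) unfolding regular_polygon_def by fastforce
  have "f \<noteq> 0"
    using assms(1,3) by auto
  then have "proots f = image_mset (\<lambda>j. fst C + R * cos (\<theta> + \<sigma> * 2 * pi * real j / real n)) (mset_set {..<n})"
    using A by (intro multiset_eqI) (auto simp: assms(4) count_image_mset_eq_card_vimage intro!: arg_cong[where f = card])
  then have "poly f (fst C + R * cos \<phi>)
      = 2 * lead_coeff f * (R / 2) ^ n * (cos (real n * \<phi>) - cos (real n * \<theta>))" for \<phi>
    using poly_shifted_cos_eq[OF n \<sigma> assms(3)] by blast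
  then have "{x. poly (pderiv f) x = 0} = (\<lambda>k. fst C + R * cos (pi * k / n)) ` {1..n-1}"
    using pderiv_roots_of_poly_shifted_cos assms(3) n \<open>R > 0\<close> by blast
  then show ?thesis
    unfolding image_cos_pi_frac_split[OF n] by blast
qed

end
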